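(* Let $n\ge1$ and let $A_{ij}$ denote the coefficient of $u^iv^jw^{n-i-j}$ in $P_{1/n}(u,v,w)$, with $A_{ij}=0$ for pairs $(i,j)\in\mathbb{Z}^2$ not corresponding to a monomial of $P_{1/n}$. Then for all integers $i,j$: $$A_{ij}^2\ge A_{i-1,j}A_{i+1,j},\qquad A_{ij}^2\ge A_{i,j-1}A_{i,j+1},\qquad A_{ij}^2\ge A_{i-1,j+1}A_{i+1,j-1}.$$ That is, the coefficients are log-concave along every horizontal, vertical and anti-diagonal ($i+j=$const) line of the Newton polygon.
   Context: Markov polynomials. Let $x,y,z$ be indeterminates. Consider the set consisting of all rationals $\rho\in[0,1]$, each written in lowest terms $\rho=a/b$ with integers $a\ge 0$, $b\ge 1$, together with the formal symbol $1/0$. Define Laurent polynomials $M_\rho(x,y,z)$ recursively by $M_{1/0}=y$, $M_{0/1}=x$, $M_{1/1}=\frac{x^2+y^2}{z}$, and: whenever $a/b$, $c/d$ are in this set with $|ad-bc|=1$ and $(a+2c)/(b+2d)\in[0,1]$, then $M_{\frac{a+2c}{b+2d}}=\big(M_{c/d}^2+M_{\frac{a+c}{b+d}}^2\big)/M_{a/b}$. This determines $M_\rho$ for every rational $\rho\in[0,1]$. Numerator. For coprime $1\le a\le b$, $P_{a/b}(u,v,w)$ denotes the homogeneous polynomial of degree $a+b-1$ such that $M_{a/b}(x,y,z)=P_{a/b}(x^2,y^2,z^2)/(x^{a-1}y^{b-1}z^{a+b-1})$; its existence is known. *)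

theory Defs
  imports Main "HOL.Real"
begin

text \<open>Markov Laurent polynomials, represented by their evaluation on positive reals
(a Laurent polynomial in x,y,z is determined by its values on the open positive octant).
A rational rho = a/b in [0,1] in lowest terms is the pair (a,b); the symbol 1/0 is (1,0).
markov (a,b) M means that M is (the evaluation of) M_(a/b) as produced by the
recursive definition.\<close>

inductive markov :: "int \<times> int \<Rightarrow> (real \<Rightarrow> real \<Rightarrow> real \<Rightarrow> real) \<Rightarrow> bool" where
  m10: "markov (1, 0) (\<lambda>x y z. y)"
| m01: "markov (0, 1) (\<lambda>x y z. x)"
| m11: "markov (1, 1) (\<lambda>x y z. (x\<^sup>2 + y\<^sup>2) / z)"
| step: "\<lbrakk> markov (a, b) f; markov (c, d) g; markov (a + c, b + d) h;
           \<bar>a * d - b * c\<bar> = 1;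
           0 \<le> a + 2 * c; a + 2 * c \<le> b + 2 * d; 0 < b + 2 * d \<rbrakk>
         \<Longrightarrow> markov (a + 2 * c, b + 2 * d)
               (\<lambda>x y z. ((g x y z)\<^sup>2 + (h x y z)\<^sup>2) / f x y z)"

text \<open>P_coeffs a b A M: A i j is the coefficient of u^i v^j w^(a+b-1-i-j) of the
homogeneous polynomial P_(a/b) of degree a+b-1 (zero for pairs outside the triangle), i.e.
M(x,y,z) = P(x^2,y^2,z^2) / (x^(a-1) y^(b-1) z^(a+b-1)).\<close>

definition P_coeffs :: "nat \<Rightarrow> nat \<Rightarrow> (int \<Rightarrow> int \<Rightarrow> int) \<Rightarrow> (real \<Rightarrow> real \<Rightarrow> real \<Rightarrow> real) \<Rightarrow> bool" where
  "P_coeffs a b A M \<longleftrightarrow>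
     (let D = int (a + b - 1) in
      (\<forall>i j. (i < 0 \<or> j < 0 \<or> i + j > D) \<longrightarrow> A i j = 0) \<and>
      (\<forall>x y z :: real. x > 0 \<longrightarrow> y > 0 \<longrightarrow> z > 0 \<longrightarrow>
         M x y z = (\<Sum>i = 0..D. \<Sum>j = 0..D - i.
                      of_int (A i j) * (x\<^sup>2) ^ nat i * (y\<^sup>2) ^ nat j * (z\<^sup>2) ^ nat (D - i - j))
                   / (x ^ (a - 1) * y ^ (b - 1) * z ^ (a + b - 1))))"

end

theory Submission
  imports Defs Complex_Main
begin

text \<open>Along the edge 1/n of the Farey tree the exchange relation reads
  M_{1/(k+2)} M_{1/k} = x^2 + M_{1/(k+1)}^2; dehomogenised at z = 1 it becomes a Cassini
  identity, so the numerators P_{1/n}(u, v, 1) satisfy the linear recurrence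
  P_{k+2} = (u + v + 1) P_{k+1} - v P_k. Solving it, the coefficient of u^i v^j is the product
  of binomial coefficients C(n-1-j, i-1) C(i+j, i) (for i \<ge> 1). Each factor is log-concave
  in both of its arguments, along each of the three lines of the Newton polygon each factor
  moves in one of these directions, and a product of nonnegative log-concave sequences is
  log-concave.\<close>

section \<open>The dehomogenised numerators P_{1/n}(u, v, 1)\<close>

fun P1n :: "nat \<Rightarrow> real \<Rightarrow> real \<Rightarrow> real" where
  "P1n 0 u v = 1"
| "P1n (Suc 0) u v = u + v"
| "P1n (Suc (Suc k)) u v = (u + v + 1) * P1n (Suc k) u v - v * P1n k u v"

lemma P1n_cassini: "P1n (Suc (Suc k)) u v * P1n k u v - (P1n (Suc k) u v)\<^sup>2 = u * v ^ k"
proof (induction k)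
  case 0
  then show ?case by (simp add: power2_eq_square algebra_simps)
next
  case (Suc k)
  have "P1n (Suc (Suc (Suc k))) u v * P1n (Suc k) u v - (P1n (Suc (Suc k)) u v)\<^sup>2
     = v * (P1n (Suc (Suc k)) u v * P1n k u v - (P1n (Suc k) u v)\<^sup>2)"
    by (simp only: P1n.simps) (simp add: power2_eq_square algebra_simps)
  with Suc show ?case by simp
qed

lemma P1n_pos:
  assumes "u > 0" "v > 0"
  shows "P1n k u v > 0"
proof -
  have "P1n k u v > 0 \<and> P1n (Suc k) u v > 0"
  proof (induction k)
    case 0
    then show ?case using assms by simp
  next
    case (Suc k)
    have "P1n (Suc (Suc k)) u v * P1n k u v = (P1n (Suc k) u v)\<^sup>2 + u * v ^ k"
      using P1n_cassini[of k u v] by simp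
    also have "\<dots> > 0" using assms Suc by (simp add: add_pos_pos)
    finally show ?case using Suc by (simp add: zero_less_mult_iff)
  qed
  then show ?thesis ..
qed

text \<open>The exchange relation for M_{1/k}(x, y, 1) = P1n k (x^2) (y^2) y / y^k.\<close>

lemma P1n_exchange:
  fixes x y :: real
  assumes "x > 0" "y > 0"
  defines "L \<equiv> \<lambda>k. P1n k (x\<^sup>2) (y\<^sup>2) * y / y ^ k"
  shows "(x\<^sup>2 + (L (Suc k))\<^sup>2) / L k = L (Suc (Suc k))"
proof -
  define u v where "u = x\<^sup>2" and "v = y\<^sup>2"
  have uv: "u > 0" "v > 0" using assms u_def v_def by auto
  have P0: "P1n k u v > 0" using P1n_pos[OF uv] .
  have yv: "y ^ (2 * k) = v ^ k" using v_def by (simp add: power_mult)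
  have "(x\<^sup>2 + (L (Suc k))\<^sup>2) / L k
      = (u + (P1n (Suc k) u v)\<^sup>2 / y ^ (2 * k)) / (P1n k u v * y / y ^ k)"
    using assms(2) unfolding L_def u_def v_def
    by (simp add: power_divide power_mult_distrib power_mult[symmetric] mult.commute)
  also have "\<dots> = (u * v ^ k + (P1n (Suc k) u v)\<^sup>2) * y ^ k / (v ^ k * P1n k u v * y)"
    using assms(2) P0 yv uv by (simp add: field_simps)
  also have "\<dots> = P1n (Suc (Suc k)) u v * P1n k u v * y ^ k / (v ^ k * P1n k u v * y)"
    using P1n_cassini[of k u v] by (simp add: algebra_simps)
  also have "\<dots> = P1n (Suc (Suc k)) u v * y ^ k / (v ^ k * y)"
    using P0 by simp
  also have "\<dots> = P1n (Suc (Suc k)) u v * y / y ^ Suc (Suc k)"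
  proof -
    have "y ^ Suc (Suc k) * y ^ k = v ^ k * y * y"
      using yv[symmetric] by (simp add: mult_2 power_add)
    then show ?thesis using assms(2) uv by (simp del: P1n.simps add: field_simps)
  qed
  finally show ?thesis unfolding L_def u_def v_def .
qed

lemma markov_numerator_0_1:
  assumes "markov (a, b) f"
  shows "a \<ge> 0 \<and> b \<ge> 0 \<and> (a = 0 \<longrightarrow> b = 1 \<and> f = (\<lambda>x y z. x))
     \<and> (a = 1 \<longrightarrow> (\<forall>x y. x > 0 \<longrightarrow> y > 0 \<longrightarrow>
           f x y 1 = P1n (nat b) (x\<^sup>2) (y\<^sup>2) * y / y ^ nat b))"
  using assms
proof (induction "(a, b)" f arbitrary: a b rule: markov.induct)
  case (step a b f c d g h)
  have nonneg: "a \<ge> 0" "b \<ge> 0" "c \<ge> 0" "d \<ge> 0" using step.hyps by auto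
  have "a + 2 * c \<noteq> 0"
  proof
    assume "a + 2 * c = 0"
    then have "a = 0" "c = 0" using nonneg by auto
    then show False using step.hyps(7) by simp
  qed
  moreover have "((g x y 1)\<^sup>2 + (h x y 1)\<^sup>2) / f x y 1
             = P1n (nat (b + 2 * d)) (x\<^sup>2) (y\<^sup>2) * y / y ^ nat (b + 2 * d)"
    if "a + 2 * c = 1" "x > 0" "y > 0" for x y :: real
  proof -
    have "a = 1" "c = 0" using that(1) nonneg by presburger+
    then have "d = 1" "g x y 1 = x" using step.hyps nonneg by auto
    obtain k where k: "b = int k" using nonneg by (metis nonneg_eq_int)
    have "nat (b + d) = Suc k" "nat (b + 2 * d) = Suc (Suc k)" using k \<open>d = 1\<close> by auto
    then show ?thesis
      using P1n_exchange[OF that(2,3), of k] step.hyps k \<open>a = 1\<close> \<open>c = 0\<close> \<open>g x y 1 = x\<close> that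
      by (simp del: P1n.simps add: power2_eq_square)
  qed
  ultimately show ?case using step.hyps nonneg by auto
qed auto

lemma markov_1n_eval:
  assumes "markov (1, int n) M" "x > 0" "y > 0"
  shows "M x y 1 = P1n n (x\<^sup>2) (y\<^sup>2) * y / y ^ n"
  using markov_numerator_0_1[OF assms(1)] assms(2,3) by auto

section \<open>Log-concavity of binomial coefficients\<close>

lemma binomial_log_concave: "(m choose k) * (m choose (k + 2)) \<le> (m choose (k + 1))\<^sup>2"
proof -
  define a b c where "a = m choose k" and "b = m choose (k + 1)" and "c = m choose (k + 2)"
  have ab: "(k + 1) * b = (m - k) * a"
    using binomial_absorption[of k m] binomial_absorb_comp[of m k] by (simp add: a_def b_def)
  have bc: "(k + 2) * c = (m - (k + 1)) * b"
    using binomial_absorption[of "Suc k" m] binomial_absorb_comp[of m "Suc k"]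
    by (simp add: b_def c_def)
  have "a * c \<le> b * b"
  proof (cases "m \<le> k")
    case True
    then show ?thesis using ab bc by simp
  next
    case False
    have "((k + 2) * (m - k)) * (a * c) = ((m - k) * a) * ((k + 2) * c)"
      by (simp add: algebra_simps)
    also have "\<dots> = ((k + 1) * b) * ((m - (k + 1)) * b)"
      by (simp only: ab[symmetric] bc)
    also have "\<dots> = ((k + 1) * (m - (k + 1))) * (b * b)"
      by (simp only: ac_simps)
    also have "\<dots> \<le> ((k + 2) * (m - k)) * (b * b)"
      by (intro mult_le_mono1 mult_le_mono) auto
    finally show ?thesis using False by simp
  qed
  then show ?thesis by (simp add: a_def b_def c_def power2_eq_square)
qed

lemma binomial_log_concave_upper: "(m choose k) * ((m + 2) choose k) \<le> ((m + 1) choose k)\<^sup>2"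
proof (cases "k \<le> m + 1")
  case False
  then show ?thesis by (simp add: binomial_eq_0)
next
  case True
  define a b c where "a = m choose k" and "b = (m + 1) choose k" and "c = (m + 2) choose k"
  have ab: "(m + 1 - k) * b = (m + 1) * a"
    using binomial_absorb_comp[of "m + 1" k] by (simp add: a_def b_def)
  have bc: "(m + 2 - k) * c = (m + 2) * b"
    using binomial_absorb_comp[of "m + 2" k] by (simp add: b_def c_def)
  have "((m + 1) * (m + 2 - k)) * (a * c) = ((m + 1) * a) * ((m + 2 - k) * c)"
    by (simp add: algebra_simps)
  also have "\<dots> = ((m + 1 - k) * b) * ((m + 2) * b)"
    by (simp only: ab[symmetric] bc)
  also have "\<dots> = ((m + 1 - k) * (m + 2)) * (b * b)"
    by (simp only: ac_simps)
  also have "\<dots> \<le> ((m + 1) * (m + 2 - k)) * (b * b)"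
  proof (intro mult_le_mono1)
    have "int ((m + 1 - k) * (m + 2)) \<le> int ((m + 1) * (m + 2 - k))"
      using True by (simp add: of_nat_diff algebra_simps)
    then show "(m + 1 - k) * (m + 2) \<le> (m + 1) * (m + 2 - k)" by linarith
  qed
  finally have "a * c \<le> b * b" using True by simp
  then show ?thesis by (simp add: a_def b_def c_def power2_eq_square)
qed

text \<open>Extended by zero to all integer arguments, binomial coefficients satisfy Pascal's rule
  and the log-concavity inequalities without side conditions.\<close>

definition zchoose :: "int \<Rightarrow> int \<Rightarrow> int" where
  "zchoose m k = (if 0 \<le> k \<and> k \<le> m then int (nat m choose nat k) else 0)"

lemma zchoose_nonneg: "zchoose m k \<ge> 0"
  by (simp add: zchoose_def)

lemma zchoose_0: "zchoose m 0 = (if m \<ge> 0 then 1 else 0)"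
  by (simp add: zchoose_def)

lemma zchoose_pascal:
  assumes "k \<noteq> 0"
  shows "zchoose m k = zchoose (m - 1) (k - 1) + zchoose (m - 1) k"
proof (cases "k < 0 \<or> m < 1")
  case True
  then show ?thesis using assms by (auto simp: zchoose_def)
next
  case False
  define K N where "K = nat (k - 1)" and "N = nat (m - 1)"
  have k: "k = int (Suc K)" and m: "m = int (Suc N)"
    using False assms by (auto simp: K_def N_def)
  have "nat k = Suc K" "nat m = Suc N" "nat (k - 1) = K" "nat (m - 1) = N"
    using k m by auto
  then show ?thesis unfolding zchoose_def using k m by auto
qed

lemma zchoose_symmetric: "zchoose m k = zchoose m (m - k)"
proof (cases "0 \<le> k \<and> k \<le> m")
  case True
  then have "nat (m - k) = nat m - nat k" by auto
  then show ?thesis using True binomial_symmetric[of "nat k" "nat m"] by (auto simp: zchoose_def)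
qed (auto simp: zchoose_def)

lemma zchoose_log_concave: "zchoose m (k - 1) * zchoose m (k + 1) \<le> (zchoose m k)\<^sup>2"
proof (cases "1 \<le> k \<and> k + 1 \<le> m")
  case True
  define K where "K = nat (k - 1)"
  have "zchoose m (k - 1) = int (nat m choose K)" "zchoose m k = int (nat m choose (K + 1))"
    "zchoose m (k + 1) = int (nat m choose (K + 2))"
    using True by (auto simp: zchoose_def K_def intro!: arg_cong2[where f = "(choose)"])
  then show ?thesis using binomial_log_concave[of "nat m" K]
    by (metis of_nat_le_iff of_nat_mult of_nat_power)
qed (auto simp: zchoose_def)

lemma zchoose_log_concave_upper: "zchoose (m - 1) k * zchoose (m + 1) k \<le> (zchoose m k)\<^sup>2"
proof (cases "0 \<le> k \<and> k \<le> m - 1")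
  case True
  define N where "N = nat (m - 1)"
  have "zchoose (m - 1) k = int (N choose nat k)" "zchoose m k = int ((N + 1) choose nat k)"
    "zchoose (m + 1) k = int ((N + 2) choose nat k)"
    using True by (auto simp: zchoose_def N_def intro!: arg_cong2[where f = "(choose)"])
  then show ?thesis using binomial_log_concave_upper[of N "nat k"]
    by (metis of_nat_le_iff of_nat_mult of_nat_power)
qed (auto simp: zchoose_def)

lemma log_concave_mult:
  fixes a b c d e f :: "'a :: linordered_idom"
  assumes "0 \<le> b" "0 \<le> c" "0 \<le> e" "0 \<le> f" "b * c \<le> a\<^sup>2" "e * f \<le> d\<^sup>2"
  shows "(b * e) * (c * f) \<le> (a * d)\<^sup>2"
proof -
  have "(b * e) * (c * f) = (b * c) * (e * f)" by (simp add: algebra_simps)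
  also have "\<dots> \<le> a\<^sup>2 * d\<^sup>2" using assms by (intro mult_mono) auto
  finally show ?thesis by (simp add: power_mult_distrib)
qed

section \<open>Polynomial functions of two variables\<close>

definition bipoly_eval :: "nat \<Rightarrow> (int \<Rightarrow> int \<Rightarrow> int) \<Rightarrow> real \<Rightarrow> real \<Rightarrow> real" where
  "bipoly_eval N c u v = (\<Sum>i\<le>N. \<Sum>j\<le>N. of_int (c (int i) (int j)) * u ^ i * v ^ j)"

definition supported_in :: "nat \<Rightarrow> (int \<Rightarrow> int \<Rightarrow> int) \<Rightarrow> bool" where
  "supported_in N c \<longleftrightarrow> (\<forall>i j. c i j \<noteq> 0 \<longrightarrow> 0 \<le> i \<and> 0 \<le> j \<and> i \<le> int N \<and> j \<le> int N)"

lemma supported_in_shift_snd: "supported_in N c \<Longrightarrow> supported_in (Suc N) (\<lambda>i j. c i (j - 1))"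
  unfolding supported_in_def by force

lemma bipoly_eval_add: "bipoly_eval N (\<lambda>i j. c i j + d i j) u v = bipoly_eval N c u v + bipoly_eval N d u v"
  unfolding bipoly_eval_def by (simp add: sum.distrib algebra_simps)

lemma bipoly_eval_diff: "bipoly_eval N (\<lambda>i j. c i j - d i j) u v = bipoly_eval N c u v - bipoly_eval N d u v"
  unfolding bipoly_eval_def by (simp add: sum_subtractf algebra_simps)

lemma bipoly_eval_raise_bound:
  assumes "supported_in N c" "N \<le> K"
  shows "bipoly_eval K c u v = bipoly_eval N c u v"
proof -
  have outside: "c (int i) (int j) = 0" if "i > N \<or> j > N" for i j
    using assms(1) that unfolding supported_in_def by fastforce
  have "bipoly_eval K c u v = (\<Sum>i\<le>K. \<Sum>j\<le>N. of_int (c (int i) (int j)) * u ^ i * v ^ j)"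
    unfolding bipoly_eval_def
    by (intro sum.cong refl sum.mono_neutral_right) (use assms(2) outside in auto)
  also have "\<dots> = bipoly_eval N c u v"
    unfolding bipoly_eval_def
    by (rule sum.mono_neutral_right) (use assms(2) outside in auto)
  finally show ?thesis .
qed

lemma bipoly_eval_shift_fst:
  assumes "supported_in N c"
  shows "bipoly_eval (Suc N) (\<lambda>i j. c (i - 1) j) u v = u * bipoly_eval N c u v"
proof -
  define g where "g i = (\<Sum>j\<le>Suc N. of_int (c (int i) (int j)) * u ^ i * v ^ j)" for i
  have c0: "c (-1) j = 0" and cN: "c (1 + int N) j = 0" for j
    using assms unfolding supported_in_def by fastforce+
  have "bipoly_eval (Suc N) (\<lambda>i j. c (i - 1) j) u v
      = (\<Sum>j\<le>Suc N. of_int (c (- 1) (int j)) * u ^ 0 * v ^ j)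
      + (\<Sum>i\<le>N. \<Sum>j\<le>Suc N. of_int (c (int (Suc i) - 1) (int j)) * u ^ Suc i * v ^ j)"
    unfolding bipoly_eval_def by (subst sum.atMost_Suc_shift) simp
  also have "\<dots> = u * (\<Sum>i\<le>N. g i)"
    by (simp add: c0 g_def sum_distrib_left algebra_simps)
  also have "(\<Sum>i\<le>N. g i) = bipoly_eval (Suc N) c u v"
    unfolding bipoly_eval_def g_def by (simp add: cN)
  also have "\<dots> = bipoly_eval N c u v"
    by (rule bipoly_eval_raise_bound[OF assms]) simp
  finally show ?thesis .
qed

lemma bipoly_eval_shift_snd:
  assumes "supported_in N c"
  shows "bipoly_eval (Suc N) (\<lambda>i j. c i (j - 1)) u v = v * bipoly_eval N c u v"
proof -
  have c0: "c i (-1) = 0" and cN: "c i (1 + int N) = 0" for i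
    using assms unfolding supported_in_def by fastforce+
  have row: "(\<Sum>j\<le>Suc N. of_int (c (int i) (int j - 1)) * u ^ i * v ^ j)
     = v * (\<Sum>j\<le>Suc N. of_int (c (int i) (int j)) * u ^ i * v ^ j)" for i
  proof -
    have "(\<Sum>j\<le>Suc N. of_int (c (int i) (int j - 1)) * u ^ i * v ^ j)
      = of_int (c (int i) (- 1)) * u ^ i * v ^ 0
        + (\<Sum>j\<le>N. of_int (c (int i) (int (Suc j) - 1)) * u ^ i * v ^ Suc j)"
      by (subst sum.atMost_Suc_shift) simp
    also have "\<dots> = v * (\<Sum>j\<le>N. of_int (c (int i) (int j)) * u ^ i * v ^ j)"
      by (simp add: c0 sum_distrib_left algebra_simps)
    also have "\<dots> = v * (\<Sum>j\<le>Suc N. of_int (c (int i) (int j)) * u ^ i * v ^ j)"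
      by (simp add: cN)
    finally show ?thesis .
  qed
  have "bipoly_eval (Suc N) (\<lambda>i j. c i (j - 1)) u v = v * bipoly_eval (Suc N) c u v"
    by (simp only: bipoly_eval_def row sum_distrib_left)
  also have "\<dots> = v * bipoly_eval N c u v"
    using bipoly_eval_raise_bound[OF assms, of "Suc N"] by simp
  finally show ?thesis .
qed

lemma polyfun_eq_0_on_positive:
  fixes a :: "nat \<Rightarrow> real"
  assumes "\<And>x. x > 0 \<Longrightarrow> (\<Sum>i\<le>N. a i * x ^ i) = 0" "k \<le> N"
  shows "a k = 0"
proof (rule ccontr)
  assume "a k \<noteq> 0"
  then have "finite {x. (\<Sum>i\<le>N. a i * x ^ i) = 0}"
    using polyfun_finite_roots[of a N] assms(2) by blast
  moreover have "{0<..} \<subseteq> {x. (\<Sum>i\<le>N. a i * x ^ i) = 0}" using assms(1) by auto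
  ultimately show False using finite_subset infinite_Ioi by blast
qed

lemma bipoly_eval_eq_0_on_positive:
  assumes "\<And>u v. u > 0 \<Longrightarrow> v > 0 \<Longrightarrow> bipoly_eval N c u v = 0" "i \<le> N" "j \<le> N"
  shows "c (int i) (int j) = 0"
proof -
  have "(\<Sum>j\<le>N. of_int (c (int i) (int j)) * v ^ j) = 0" if "v > 0" for v :: real
  proof (rule polyfun_eq_0_on_positive[OF _ assms(2)])
    fix u :: real assume "u > 0"
    then have "bipoly_eval N c u v = 0" using assms(1) that by blast
    then show "(\<Sum>i\<le>N. (\<Sum>j\<le>N. of_int (c (int i) (int j)) * v ^ j) * u ^ i) = 0"
      unfolding bipoly_eval_def by (simp add: sum_distrib_right sum_distrib_left algebra_simps)
  qed
  from polyfun_eq_0_on_positive[OF this assms(3)] show ?thesis by simp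
qed

lemma bipoly_coeffs_unique:
  assumes "supported_in N c" "supported_in N d"
    and "\<And>u v. u > 0 \<Longrightarrow> v > 0 \<Longrightarrow> bipoly_eval N c u v = bipoly_eval N d u v"
  shows "c = d"
proof (intro ext)
  fix i j
  show "c i j = d i j"
  proof (cases "0 \<le> i \<and> 0 \<le> j \<and> i \<le> int N \<and> j \<le> int N")
    case True
    have "c (int (nat i)) (int (nat j)) - d (int (nat i)) (int (nat j)) = 0"
      by (rule bipoly_eval_eq_0_on_positive[of N])
        (use True assms(3) in \<open>auto simp: bipoly_eval_diff\<close>)
    then show ?thesis using True by simp
  next
    case False
    then show ?thesis using assms(1,2)[unfolded supported_in_def, rule_format, of i j] by metis
  qed
qed

section \<open>The coefficients of P_{1/n}\<close>

definition P1n_coeff :: "nat \<Rightarrow> int \<Rightarrow> int \<Rightarrow> int" where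
  "P1n_coeff n i j = (if i = 0 then (if j = int n then 1 else 0)
     else zchoose (int n - 1 - j) (i - 1) * zchoose (i + j) i)"

lemma P1n_coeff_eq_0: "i < 0 \<or> j < 0 \<or> i + j > int n \<Longrightarrow> P1n_coeff n i j = 0"
  unfolding P1n_coeff_def zchoose_def by auto

lemma supported_in_P1n_coeff: "supported_in n (P1n_coeff n)"
  unfolding supported_in_def by (smt (verit) P1n_coeff_eq_0)

lemma P1n_coeff_rec:
  "P1n_coeff (Suc (Suc n)) i j = P1n_coeff (Suc n) (i - 1) j + P1n_coeff (Suc n) i (j - 1)
     + P1n_coeff (Suc n) i j - P1n_coeff n i (j - 1)"
proof -
  consider "i \<le> 0" | "i = 1" | "i \<ge> 2" by linarith
  then show ?thesis
  proof cases
    case 1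
    then show ?thesis by (auto simp: P1n_coeff_def zchoose_def)
  next
    case 2
    then show ?thesis using zchoose_pascal[of 1 "1 + j"]
      by (simp add: P1n_coeff_def zchoose_0 algebra_simps)
  next
    case 3
    then show ?thesis using zchoose_pascal[of i "i + j"] zchoose_pascal[of "i - 1" "int n + 1 - j"]
      by (simp add: P1n_coeff_def algebra_simps)
  qed
qed

lemma P1n_eq_bipoly_eval: "P1n n u v = bipoly_eval n (P1n_coeff n) u v"
proof (induction n u v rule: P1n.induct)
  case (1 u v)
  then show ?case by (simp add: bipoly_eval_def P1n_coeff_def)
next
  case (2 u v)
  then show ?case by (simp add: bipoly_eval_def P1n_coeff_def zchoose_def)
next
  case (3 k u v)
  note supp = supported_in_P1n_coeff
  have "P1n_coeff (Suc (Suc k)) = (\<lambda>i j. P1n_coeff (Suc k) (i - 1) j + P1n_coeff (Suc k) i (j - 1)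
      + P1n_coeff (Suc k) i j - P1n_coeff k i (j - 1))"
    by (intro ext) (rule P1n_coeff_rec)
  then have "bipoly_eval (Suc (Suc k)) (P1n_coeff (Suc (Suc k))) u v
     = bipoly_eval (Suc (Suc k)) (\<lambda>i j. P1n_coeff (Suc k) (i - 1) j) u v
       + bipoly_eval (Suc (Suc k)) (\<lambda>i j. P1n_coeff (Suc k) i (j - 1)) u v
       + bipoly_eval (Suc (Suc k)) (P1n_coeff (Suc k)) u v
       - bipoly_eval (Suc (Suc k)) (\<lambda>i j. P1n_coeff k i (j - 1)) u v"
    by (simp add: bipoly_eval_add bipoly_eval_diff)
  also have "\<dots> = u * P1n (Suc k) u v + v * P1n (Suc k) u v + P1n (Suc k) u v - v * P1n k u v"
    using bipoly_eval_shift_fst[OF supp] bipoly_eval_shift_snd[OF supp]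
      bipoly_eval_raise_bound[OF supp, of "Suc k" "Suc (Suc k)"]
      bipoly_eval_raise_bound[OF supported_in_shift_snd[OF supp[of k]], of "Suc (Suc k)"] 3
    by simp
  finally show ?case by (simp add: algebra_simps)
qed

lemma P1n_coeff_mirror_right:
  "i \<noteq> 0 \<Longrightarrow> P1n_coeff n i j = zchoose (int n - 1 - j) (i - 1) * zchoose (i + j) j"
  unfolding P1n_coeff_def using zchoose_symmetric[of "i + j" i] by simp

lemma P1n_coeff_mirror_left:
  "i \<noteq> 0 \<Longrightarrow> P1n_coeff n i j = zchoose (int n - 1 - j) (int n - i - j) * zchoose (i + j) i"
  unfolding P1n_coeff_def using zchoose_symmetric[of "int n - 1 - j" "i - 1"] by (simp add: algebra_simps)

lemmas log_concave_zchoose_mult = log_concave_mult[OF zchoose_nonneg zchoose_nonneg zchoose_nonneg zchoose_nonneg]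

lemma P1n_coeff_log_concave_fst: "P1n_coeff n (i - 1) j * P1n_coeff n (i + 1) j \<le> (P1n_coeff n i j)\<^sup>2"
proof -
  consider "i \<le> 1" | "i \<ge> 2" by linarith
  then show ?thesis
  proof cases
    case 1
    then have "P1n_coeff n (i - 1) j * P1n_coeff n (i + 1) j = 0"
      by (auto simp: P1n_coeff_def zchoose_def)
    then show ?thesis by (metis zero_le_power2)
  next
    case 2
    then show ?thesis
      using log_concave_zchoose_mult[OF zchoose_log_concave[of "int n - 1 - j" "i - 1"]
          zchoose_log_concave_upper[of "i + j" j]]
      by (simp add: P1n_coeff_mirror_right algebra_simps)
  qed
qed

lemma P1n_coeff_log_concave_snd: "P1n_coeff n i (j - 1) * P1n_coeff n i (j + 1) \<le> (P1n_coeff n i j)\<^sup>2"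
proof -
  consider "i \<le> 0" | "i \<ge> 1" by linarith
  then show ?thesis
  proof cases
    case 1
    then have "P1n_coeff n i (j - 1) * P1n_coeff n i (j + 1) = 0"
      by (auto simp: P1n_coeff_def zchoose_def)
    then show ?thesis by (metis zero_le_power2)
  next
    case 2
    then show ?thesis
      using log_concave_zchoose_mult[OF zchoose_log_concave_upper[of "int n - 1 - j" "i - 1"]
          zchoose_log_concave_upper[of "i + j" i]]
      by (simp add: P1n_coeff_def algebra_simps)
  qed
qed

lemma P1n_coeff_log_concave_antidiag:
  "P1n_coeff n (i - 1) (j + 1) * P1n_coeff n (i + 1) (j - 1) \<le> (P1n_coeff n i j)\<^sup>2"
proof -
  consider "i \<le> 0" | "i = 1" | "i \<ge> 2" by linarith
  then show ?thesis
  proof cases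
    case 1
    then show ?thesis by (simp add: P1n_coeff_def zchoose_def)
  next
    case 2
    show ?thesis
    proof (cases "j = int n - 1")
      case True
      have "P1n_coeff n (i - 1) (j + 1) = zchoose (int n) 0"
        "P1n_coeff n (i + 1) (j - 1) = zchoose (int n) 2" "P1n_coeff n i j = zchoose (int n) 1"
        using 2 True by (simp_all add: P1n_coeff_def zchoose_def)
      then show ?thesis using zchoose_log_concave[of "int n" 1] by simp
    qed (use 2 in \<open>simp add: P1n_coeff_def\<close>)
  next
    case 3
    then show ?thesis
      using log_concave_zchoose_mult[OF zchoose_log_concave_upper[of "int n - 1 - j" "int n - i - j"]
          zchoose_log_concave[of "i + j" i]]
      by (simp add: P1n_coeff_mirror_left algebra_simps)
  qed
qed

section \<open>The coefficients of the Markov polynomial M_{1/n}\<close>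

lemma sum_atLeastAtMost_int_nat: "(\<Sum>i = 0..int n. g i) = (\<Sum>i\<le>n. g (int i))"
proof -
  have "{0..int n} = int ` {..n}" by (simp add: image_int_atLeastAtMost atMost_atLeast0)
  then show ?thesis by (simp add: sum.reindex)
qed

lemma P_coeffs_1n:
  assumes "P_coeffs 1 n A M"
  shows P_coeffs_1n_supported: "supported_in n A"
    and P_coeffs_1n_eval:
      "\<And>x y. x > 0 \<Longrightarrow> y > 0 \<Longrightarrow> M x y 1 = bipoly_eval n A (x\<^sup>2) (y\<^sup>2) / y ^ (n - 1)"
proof -
  have A0: "A i j = 0" if "i < 0 \<or> j < 0 \<or> i + j > int n" for i j
    using assms that unfolding P_coeffs_def Let_def by auto
  then show "supported_in n A"
    unfolding supported_in_def by (smt (verit))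
  fix x y :: real
  assume "x > 0" "y > 0"
  have triangle: "(\<Sum>i = 0..int n. \<Sum>j = 0..int n - i. of_int (A i j) * u ^ nat i * v ^ nat j)
      = bipoly_eval n A u v" for u v :: real
  proof -
    have "(\<Sum>i = 0..int n. \<Sum>j = 0..int n - i. of_int (A i j) * u ^ nat i * v ^ nat j)
        = (\<Sum>i = 0..int n. \<Sum>j = 0..int n. of_int (A i j) * u ^ nat i * v ^ nat j)"
      by (intro sum.cong refl sum.mono_neutral_left) (use A0 in auto)
    also have "\<dots> = bipoly_eval n A u v"
      unfolding bipoly_eval_def sum_atLeastAtMost_int_nat by simp
    finally show ?thesis .
  qed
  show "M x y 1 = bipoly_eval n A (x\<^sup>2) (y\<^sup>2) / y ^ (n - 1)"
    using assms \<open>x > 0\<close> \<open>y > 0\<close> unfolding P_coeffs_def Let_def triangle[symmetric] by simp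
qed

theorem theorem6p4:
  fixes n :: nat and M :: "real \<Rightarrow> real \<Rightarrow> real \<Rightarrow> real" and A :: "int \<Rightarrow> int \<Rightarrow> int"
  assumes "n \<ge> 1"
    and "markov (1, int n) M"
    and "P_coeffs 1 n A M"
  shows "\<forall>i j. (A i j)\<^sup>2 \<ge> A (i - 1) j * A (i + 1) j
             \<and> (A i j)\<^sup>2 \<ge> A i (j - 1) * A i (j + 1)
             \<and> (A i j)\<^sup>2 \<ge> A (i - 1) (j + 1) * A (i + 1) (j - 1)"
proof -
  have "A = P1n_coeff n"
  proof (rule bipoly_coeffs_unique[OF P_coeffs_1n_supported[OF assms(3)] supported_in_P1n_coeff])
    fix u v :: real
    assume "u > 0" "v > 0"
    define x y where "x = sqrt u" and "y = sqrt v"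
    have xy: "x > 0" "y > 0" "u = x\<^sup>2" "v = y\<^sup>2"
      using \<open>u > 0\<close> \<open>v > 0\<close> by (auto simp: x_def y_def)
    have "y ^ n = y * y ^ (n - 1)"
      using assms(1) by (simp add: power_eq_if)
    then show "bipoly_eval n A u v = bipoly_eval n (P1n_coeff n) u v"
      using markov_1n_eval[OF assms(2) xy(1,2)] P_coeffs_1n_eval[OF assms(3) xy(1,2)] xy
      by (simp add: P1n_eq_bipoly_eval field_simps)
  qed
  then show ?thesis
    using P1n_coeff_log_concave_fst P1n_coeff_log_concave_snd P1n_coeff_log_concave_antidiag
    by blast
qed

end
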